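(* Let $(Y_n)_{n\geq0}$ be a Galton–Watson process with offspring distribution $\theta$, with $Y_0=1$ under $\mathbb P_1$. Then $$\mathbb P_1(Y_r\neq0)\sim\frac{2}{r^2}\quad\text{as } r\to\infty,$$ and the distribution of $r^{-2}Y_r$ under $\mathbb P_1(\cdot\mid Y_r\neq0)$ converges as $r\to\infty$ to the probability distribution on $[0,\infty)$ with Laplace transform $$\lambda\mapsto 1-\Big(1+\sqrt{\tfrac{2}{\lambda}}\Big)^{-2},\qquad\lambda>0.$$
   Context: $\theta$ is the probability distribution on $\{0,1,2,\dots\}$ with generating function $g_\theta(y)=\sum_k\theta(k)y^k=1-\frac{8}{\big(\sqrt{\frac{9-y}{1-y}}+2\big)^2-1}$ for $0\leq y<1$. *)

theory Defs
  imports "HOL-Probability.Probability"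
begin

fun offspring_sum :: "nat pmf \<Rightarrow> nat \<Rightarrow> nat pmf" where
  "offspring_sum \<theta> 0 = return_pmf 0"
| "offspring_sum \<theta> (Suc k) =
     map_pmf (\<lambda>(a, b). a + b) (pair_pmf \<theta> (offspring_sum \<theta> k))"

text \<open>Law of Y_n for the Galton-Watson process with offspring law theta, started from Y_0 = 1.\<close>
fun gw_law :: "nat pmf \<Rightarrow> nat \<Rightarrow> nat pmf" where
  "gw_law \<theta> 0 = return_pmf 1"
| "gw_law \<theta> (Suc n) = bind_pmf (gw_law \<theta> n) (offspring_sum \<theta>)"

definition g_theta :: "real \<Rightarrow> real" where
  "g_theta y = 1 - 8 / ((sqrt ((9 - y) / (1 - y)) + 2)^2 - 1)"

end

theory Submission
  imports Defs "HOL-Real_Asymp.Real_Asymp"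
begin

text \<open>
  In the coordinate \<open>S y = sqrt ((9 - y) / (1 - y))\<close> the offspring generating function is a
  translation, \<open>S (g_theta y) = S y + 2\<close>, so the generating function of \<open>Y\<^sub>r\<close> is
  \<open>S\<^sup>-\<^sup>1 (S y + 2 r)\<close>. This gives \<open>\<P>(Y\<^sub>r = 0)\<close> and the Laplace transform of \<open>Y\<^sub>r / r\<^sup>2\<close>
  given \<open>Y\<^sub>r \<noteq> 0\<close> in closed form, and the latter converges to the stated limit.
  Laplace transforms on \<open>[0, \<infinity>)\<close> determine the law (Weierstrass approximation in the variable
  \<open>exp (-x)\<close>), and the uniform bound \<open>1 - L\<^sub>r(s) \<le> 3 s\<close> makes the family tight, so by Helly's
  selection theorem every subsequence has a further subsequence converging to the one law with
  the limiting transform.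
\<close>

section \<open>Probability generating functions\<close>

definition pgf :: "nat pmf \<Rightarrow> real \<Rightarrow> ennreal" where
  "pgf p y = (\<integral>\<^sup>+ k. ennreal (y ^ k) \<partial>measure_pmf p)"

lemma pgf_le_1: assumes "0 \<le> y" "y \<le> 1" shows "pgf p y \<le> 1"
proof -
  have "pgf p y \<le> (\<integral>\<^sup>+ k. 1 \<partial>measure_pmf p)"
    unfolding pgf_def by (intro nn_integral_mono) (use assms in \<open>auto simp: power_le_one\<close>)
  also have "\<dots> = 1" by (simp add: measure_pmf.emeasure_space_1)
  finally show ?thesis .
qed

lemma pgf_offspring_sum: assumes "0 \<le> y" shows "pgf (offspring_sum \<theta> k) y = pgf \<theta> y ^ k"
proof (induction k)
  case 0 then show ?case by (simp add: pgf_def)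
next
  case (Suc k)
  have "pgf (offspring_sum \<theta> (Suc k)) y
     = (\<integral>\<^sup>+ a. \<integral>\<^sup>+ b. ennreal (y ^ a) * ennreal (y ^ b) \<partial>offspring_sum \<theta> k \<partial>\<theta>)"
    by (simp add: pgf_def nn_integral_pair_pmf' power_add ennreal_mult assms)
  also have "\<dots> = (\<integral>\<^sup>+ a. ennreal (y ^ a) * pgf (offspring_sum \<theta> k) y \<partial>\<theta>)"
    by (simp add: pgf_def nn_integral_cmult)
  also have "\<dots> = pgf \<theta> y * pgf (offspring_sum \<theta> k) y"
    by (simp add: pgf_def nn_integral_multc)
  finally show ?case using Suc by simp
qed

lemma pgf_bind_offspring_sum:
  assumes "0 \<le> y" "pgf \<theta> y = ennreal z" "0 \<le> z"
  shows "pgf (bind_pmf p (offspring_sum \<theta>)) y = pgf p z"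
proof -
  have "pgf (bind_pmf p (offspring_sum \<theta>)) y = (\<integral>\<^sup>+ k. pgf (offspring_sum \<theta> k) y \<partial>p)"
    by (simp add: pgf_def)
  also have "\<dots> = (\<integral>\<^sup>+ k. ennreal z ^ k \<partial>p)"
    by (simp add: pgf_offspring_sum[OF assms(1)] assms(2))
  also have "\<dots> = pgf p z"
    unfolding pgf_def by (simp add: ennreal_power assms)
  finally show ?thesis .
qed

lemma pgf_eq_suminf:
  assumes "0 \<le> y" "y \<le> 1"
  shows "pgf p y = ennreal (\<Sum>k. pmf p k * y ^ k)"
proof -
  have eq: "pgf p y = (\<Sum>k. ennreal (pmf p k * y ^ k))"
    unfolding pgf_def nn_integral_measure_pmf nn_integral_count_space_nat
    by (simp add: ennreal_mult assms)
  then have "(\<Sum>k. ennreal (pmf p k * y ^ k)) \<noteq> top"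
    using pgf_le_1[OF assms, of p] by (auto simp: top_unique)
  then have "summable (\<lambda>k. pmf p k * y ^ k)"
    by (intro summable_suminf_not_top) (auto simp: assms)
  then show ?thesis unfolding eq by (intro suminf_ennreal2) (auto simp: assms)
qed

lemma pgf_0: "pgf p 0 = ennreal (pmf p 0)"
proof -
  have "pgf p 0 = (\<integral>\<^sup>+ k. indicator {0} k \<partial>measure_pmf p)"
    unfolding pgf_def by (intro nn_integral_cong) (auto simp: indicator_def)
  then show ?thesis by (simp add: emeasure_pmf_single)
qed

lemma integral_power_cond_pmf_nonzero:
  fixes p :: "nat pmf" and y :: real
  assumes ne: "set_pmf p \<inter> {k. k \<noteq> 0} \<noteq> {}" and y: "0 \<le> y" "y \<le> 1"
  shows "(\<integral>k. y ^ k \<partial>measure_pmf (cond_pmf p {k. k \<noteq> 0}))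
       = (enn2real (pgf p y) - pmf p 0) / measure_pmf.prob p {k. k \<noteq> 0}"
proof -
  let ?A = "{k::nat. k \<noteq> 0}"
  let ?P = "measure_pmf.prob p ?A"
  define X where "X = (\<integral>\<^sup>+ k. ennreal (y ^ k) * indicator ?A k \<partial>p)"
  have split: "pgf p y = X + ennreal (pmf p 0)"
  proof -
    have "pgf p y = (\<integral>\<^sup>+ k. ennreal (y ^ k) * indicator ?A k + indicator {0} k \<partial>p)"
      unfolding pgf_def by (intro nn_integral_cong) (auto simp: indicator_def)
    also have "\<dots> = X + (\<integral>\<^sup>+ k. indicator {0} k \<partial>p)"
      unfolding X_def by (intro nn_integral_add) auto
    finally show ?thesis by (simp add: emeasure_pmf_single)
  qed
  then have "X < top"
    using pgf_le_1[OF y, of p] by (metis add_increasing2 ennreal_one_less_top le_iff_add order_le_less_trans zero_le)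
  then obtain x where x: "X = ennreal x" "0 \<le> x" by (cases X rule: ennreal_cases) auto
  have P: "?P > 0" using ne by (auto intro: measure_pmf_posI)
  have "(\<integral>k. y ^ k \<partial>measure_pmf (cond_pmf p ?A))
        = enn2real (\<integral>\<^sup>+ k. ennreal (y ^ k) \<partial>measure_pmf (cond_pmf p ?A))"
    by (intro integral_eq_nn_integral) (auto simp: y)
  also have "(\<integral>\<^sup>+ k. ennreal (y ^ k) \<partial>measure_pmf (cond_pmf p ?A)) = X / ennreal ?P"
    unfolding cond_pmf.rep_eq[OF ne] X_def
    by (subst nn_integral_uniform_measure) (auto simp: measure_pmf.emeasure_eq_measure)
  also have "enn2real (X / ennreal ?P) = x / ?P"
    using P x by (simp add: divide_ennreal)
  moreover have "enn2real (pgf p y) = x + pmf p 0"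
    using split x by (simp flip: ennreal_plus)
  ultimately show ?thesis by simp
qed

section \<open>Laplace transforms of distributions on the half-line\<close>

lemma (in real_distribution) integrable_exp_neg_mult:
  assumes "AE x in M. 0 \<le> x" "0 \<le> s"
  shows "integrable M (\<lambda>x. exp (- s * x))"
  by (rule integrable_const_bound[where B=1])
     (use assms in \<open>auto elim!: eventually_mono simp: mult_nonneg_nonneg\<close>)

lemma (in prob_space) abs_integral_diff_le:
  fixes f g :: "'a \<Rightarrow> real"
  assumes "integrable M f" "integrable M g" "AE x in M. \<bar>f x - g x\<bar> \<le> e"
  shows "\<bar>(\<integral>x. f x \<partial>M) - (\<integral>x. g x \<partial>M)\<bar> \<le> e"
proof -
  have "\<bar>(\<integral>x. f x - g x \<partial>M)\<bar> \<le> (\<integral>x. \<bar>f x - g x\<bar> \<partial>M)"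
    by (rule integral_abs_bound)
  also have "\<dots> \<le> (\<integral>x. e \<partial>M)"
    by (rule integral_mono_AE) (use assms in auto)
  also have "\<dots> = e" by (simp add: prob_space)
  finally show ?thesis using assms by simp
qed

lemma exp_polynomial_approx:
  fixes h :: "real \<Rightarrow> real"
  assumes h: "continuous_on UNIV h" and h0: "\<And>x. x \<ge> b \<Longrightarrow> h x = 0" and e: "e > 0"
  obtains A N where "\<And>x. 0 \<le> x \<Longrightarrow> \<bar>h x - (\<Sum>i\<le>N. A i * exp (- x) ^ i)\<bar> < e"
proof -
  \<comment> \<open>In the variable \<open>t = exp (-x)\<close>, cut off below \<open>c\<close> where \<open>h\<close> already vanishes.\<close>
  define c where "c = exp (- (max b 0) - 1)"
  have c: "0 < c" "c \<le> 1" by (auto simp: c_def)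
  define f where "f t = h (- ln (max t c))" for t
  have "continuous_on {0..1} (\<lambda>t. - ln (max t c))"
    using c by (intro continuous_intros) auto
  then have "continuous_on {0..1} f"
    unfolding f_def by (rule continuous_on_compose2[OF h]) auto
  then obtain g where "real_polynomial_function g" and g: "\<And>t. t \<in> {0..1} \<Longrightarrow> \<bar>f t - g t\<bar> < e"
    using Stone_Weierstrass_real_polynomial_function[OF compact_Icc _ e] by blast
  then obtain A N where A: "g = (\<lambda>t. \<Sum>i\<le>N. A i * t ^ i)"
    using real_polynomial_function_iff_sum by blast
  have f_exp: "f (exp (- x)) = h x" if "0 \<le> x" for x
  proof (cases "exp (- x) \<ge> c")
    case True then show ?thesis by (simp add: f_def max_def)
  next
    case False
    then have "x \<ge> b" "max (exp (- x)) c = c" by (auto simp: c_def)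
    then show ?thesis by (simp add: f_def c_def h0)
  qed
  have "\<bar>h x - (\<Sum>i\<le>N. A i * exp (- x) ^ i)\<bar> < e" if "0 \<le> x" for x
    using g[of "exp (- x)"] f_exp[OF that] that by (simp add: A)
  then show thesis by (rule that)
qed

lemma integral_exp_polynomial:
  assumes "real_distribution M" "AE x in M. 0 \<le> x"
  shows "(\<integral>x. (\<Sum>i\<le>N. A i * exp (- x) ^ i) \<partial>M) = (\<Sum>i\<le>N. A i * (\<integral>x. exp (- real i * x) \<partial>M))"
proof -
  interpret real_distribution M by fact
  have "integrable M (\<lambda>x. exp (- real i * x))" for i
    by (rule integrable_exp_neg_mult) (use assms(2) in auto)
  then show ?thesis by (simp add: exp_of_nat_mult[symmetric] integral_sum)
qed

lemma integral_eq_if_laplace_eq: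
  fixes M1 M2 :: "real measure" and h :: "real \<Rightarrow> real"
  assumes M1: "real_distribution M1" and M2: "real_distribution M2"
    and AE1: "AE x in M1. 0 \<le> x" and AE2: "AE x in M2. 0 \<le> x"
    and L: "\<And>k::nat. k \<ge> 1 \<Longrightarrow> (\<integral>x. exp (- real k * x) \<partial>M1) = (\<integral>x. exp (- real k * x) \<partial>M2)"
    and h: "continuous_on UNIV h" "\<And>x. \<bar>h x\<bar> \<le> 1" "\<And>x. x \<ge> b \<Longrightarrow> h x = 0"
  shows "(\<integral>x. h x \<partial>M1) = (\<integral>x. h x \<partial>M2)"
proof -
  have hm[measurable]: "h \<in> borel_measurable borel" using h(1) by (rule borel_measurable_continuous_onI)
  have "\<bar>(\<integral>x. h x \<partial>M1) - (\<integral>x. h x \<partial>M2)\<bar> \<le> 0 + e" if "e > 0" for e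
  proof -
    have e: "e / 2 > 0" using that by simp
    obtain A N where approx: "\<And>x. 0 \<le> x \<Longrightarrow> \<bar>h x - (\<Sum>i\<le>N. A i * exp (- x) ^ i)\<bar> < e / 2"
      using exp_polynomial_approx[OF h(1) h(3) e] by blast
    let ?g = "\<lambda>x. \<Sum>i\<le>N. A i * exp (- x) ^ i"
    have close: "\<bar>(\<integral>x. h x \<partial>M) - (\<integral>x. ?g x \<partial>M)\<bar> \<le> e / 2"
      if "real_distribution M" "AE x in M. 0 \<le> x" for M
    proof -
      interpret real_distribution M by fact
      have "integrable M (\<lambda>x. exp (- real i * x))" for i
        by (rule integrable_exp_neg_mult) (use that(2) in auto)
      then have "integrable M ?g" by (simp add: exp_of_nat_mult[symmetric])
      moreover have "integrable M h" by (rule integrable_const_bound[where B=1]) (auto simp: h(2))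
      ultimately show ?thesis
        by (intro abs_integral_diff_le) (use that(2) approx in \<open>auto elim!: eventually_mono intro: less_imp_le\<close>)
    qed
    have "(\<integral>x. exp (- real i * x) \<partial>M1) = (\<integral>x. exp (- real i * x) \<partial>M2)" for i
      using L[of i] M1 M2 by (cases "i = 0") (auto simp: real_distribution_def prob_space.prob_space)
    then have "(\<integral>x. ?g x \<partial>M1) = (\<integral>x. ?g x \<partial>M2)"
      by (simp add: integral_exp_polynomial[OF M1 AE1] integral_exp_polynomial[OF M2 AE2])
    then show ?thesis using close[OF M1 AE1] close[OF M2 AE2] by linarith
  qed
  then have "\<bar>(\<integral>x. h x \<partial>M1) - (\<integral>x. h x \<partial>M2)\<bar> \<le> 0" by (rule field_le_epsilon)
  then show ?thesis by simp
qed

lemma le_at_right_continuous: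
  fixes F :: "real \<Rightarrow> real"
  assumes "continuous (at_right x) F" "\<And>y. y > x \<Longrightarrow> c \<le> F y"
  shows "c \<le> F x"
proof (rule tendsto_le[OF trivial_limit_at_right_real _ tendsto_const])
  show "(F \<longlongrightarrow> F x) (at_right x)" using assms(1) by (simp add: continuous_within)
  show "\<forall>\<^sub>F y in at_right x. c \<le> F y"
    using eventually_at_right_less by (rule eventually_mono) (rule assms(2))
qed

lemma real_distribution_eq_if_laplace_eq:
  fixes M1 M2 :: "real measure"
  assumes M1: "real_distribution M1" and M2: "real_distribution M2"
    and AE1: "AE x in M1. 0 \<le> x" and AE2: "AE x in M2. 0 \<le> x"
    and L: "\<And>k::nat. k \<ge> 1 \<Longrightarrow> (\<integral>x. exp (- real k * x) \<partial>M1) = (\<integral>x. exp (- real k * x) \<partial>M2)"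
  shows "M1 = M2"
proof -
  have cts_step: "(\<integral>z. cts_step x y z \<partial>M1) = (\<integral>z. cts_step x y z \<partial>M2)" if "x < y" for x y
  proof (rule integral_eq_if_laplace_eq[OF M1 M2 AE1 AE2 L])
    show "continuous_on UNIV (cts_step x y)"
      using that by (rule uniformly_continuous_imp_continuous[OF cts_step_uniformly_continuous])
  qed (use that in \<open>auto simp: cts_step_def\<close>)
  \<comment> \<open>\<open>cts_step x y\<close> is squeezed between the indicators of \<open>{..x}\<close> and \<open>{..y}\<close>.\<close>
  have cdf_le: "cdf N1 x \<le> cdf N2 x"
    if N: "real_distribution N1" "real_distribution N2"
      and eq: "\<And>x y. x < y \<Longrightarrow> (\<integral>z. cts_step x y z \<partial>N1) = (\<integral>z. cts_step x y z \<partial>N2)" for N1 N2 x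
  proof (rule le_at_right_continuous[where F="cdf N2"])
    show "continuous (at_right x) (cdf N2)"
      by (rule finite_borel_measure.cdf_is_right_cont[OF real_distribution.finite_borel_measure_M[OF N(2)]])
    fix y assume "x < y"
    then show "cdf N1 x \<le> cdf N2 y"
      using real_distribution.cdf_cts_step[OF N(1), of x y] real_distribution.cdf_cts_step[OF N(2), of x y]
        eq[of x y] by simp
  qed
  have "cdf M1 = cdf M2"
    using cdf_le[OF M1 M2 cts_step] cdf_le[OF M2 M1 cts_step[symmetric]] by (intro ext antisym)
  then show ?thesis by (rule cdf_unique[OF M1 M2])
qed

lemma (in real_distribution) measure_greaterThan_laplace_bound:
  assumes nonneg: "AE x in M. 0 \<le> x" and s: "s > 0"
  shows "measure M {b<..} * (1 - exp (- s * b)) \<le> 1 - (\<integral>x. exp (- s * x) \<partial>M)"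
proof -
  have int: "integrable M (\<lambda>x. exp (- s * x))"
    by (rule integrable_exp_neg_mult) (use nonneg s in auto)
  have "measure M {b<..} * (1 - exp (- s * b)) = (\<integral>x. (1 - exp (- s * b)) * indicator {b<..} x \<partial>M)"
    by simp
  also have "\<dots> \<le> (\<integral>x. 1 - exp (- s * x) \<partial>M)"
  proof (rule integral_mono_AE)
    show "integrable M (\<lambda>x. (1 - exp (- s * b)) * indicator {b<..} x)"
      by (rule integrable_const_bound[where B="\<bar>1 - exp (- s * b)\<bar>"]) (auto simp: indicator_def)
    show "AE x in M. (1 - exp (- s * b)) * indicator {b<..} x \<le> 1 - exp (- s * x)"
      using nonneg by eventually_elim (use s in \<open>auto simp: indicator_def mult_nonneg_nonneg\<close>)
  qed (use int in simp)
  also have "\<dots> = 1 - (\<integral>x. exp (- s * x) \<partial>M)"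
    using int prob_space space_eq_univ by simp
  finally show ?thesis .
qed

lemma tight_if_laplace_bound:
  fixes \<mu> :: "nat \<Rightarrow> real measure"
  assumes distr: "\<And>n. real_distribution (\<mu> n)" and nonneg: "\<And>n. AE x in \<mu> n. 0 \<le> x"
    and bound: "\<And>n s. s > 0 \<Longrightarrow> 1 - (\<integral>x. exp (- s * x) \<partial>\<mu> n) \<le> C * s"
  shows "tight \<mu>"
  unfolding tight_def
proof (intro conjI allI impI distr)
  fix \<epsilon> :: real assume \<epsilon>: "\<epsilon> > 0"
  define s where "s = \<epsilon> / (4 * max C 1)"
  define b where "b = 2 / s"
  have s: "s > 0" and Cs: "C * s \<le> \<epsilon> / 4" and sb: "s * b = 2"
    using \<epsilon> by (auto simp: s_def b_def field_simps max_def)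
  have "exp (- 2) \<le> (1 / 2 :: real)"
    using exp_ge_add_one_self[of 2] by (simp add: exp_minus field_simps)
  then have "1 / 2 \<le> 1 - exp (- s * b)" by (simp add: sb)
  have "1 - \<epsilon> < measure (\<mu> n) {-1<..b}" for n
  proof -
    interpret real_distribution "\<mu> n" by (rule distr)
    have "measure (\<mu> n) {b<..} * (1 / 2) \<le> measure (\<mu> n) {b<..} * (1 - exp (- s * b))"
      by (rule mult_left_mono) (fact, rule measure_nonneg)
    then have tail: "measure (\<mu> n) {b<..} \<le> \<epsilon> / 2"
      using measure_greaterThan_laplace_bound[OF nonneg s, of b] bound[OF s, of n] Cs by linarith
    have "measure (\<mu> n) {..-1} = 0"
      using nonneg[of n] by (subst prob_eq_0) (auto elim: eventually_mono)
    moreover have "1 - measure (\<mu> n) {-1<..b} = measure (\<mu> n) ({..-1} \<union> {b<..})"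
    proof -
      have "UNIV - {-1<..b} = {..-1} \<union> {b<..}" by auto
      then show ?thesis using prob_compl[of "{-1<..b}"] by simp
    qed
    moreover have "measure (\<mu> n) ({..-1} \<union> {b<..}) \<le> measure (\<mu> n) {..-1} + measure (\<mu> n) {b<..}"
      by (rule measure_Un_le) auto
    ultimately show ?thesis using tail \<epsilon> by linarith
  qed
  moreover have "-1 < b" using s by (simp add: b_def order.strict_trans[of _ 0])
  ultimately show "\<exists>a b. a < b \<and> (\<forall>n. 1 - \<epsilon> < measure (\<mu> n) {a<..b})" by blast
qed

lemma weak_conv_nonneg:
  fixes \<mu> :: "nat \<Rightarrow> real measure"
  assumes distr: "\<And>n. real_distribution (\<mu> n)" and nonneg: "\<And>n. AE x in \<mu> n. 0 \<le> x"
    and \<nu>: "real_distribution \<nu>" and conv: "weak_conv_m \<mu> \<nu>"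
  shows "AE x in \<nu>. 0 \<le> x"
proof -
  interpret real_distribution \<nu> by fact
  define f where "f x = min 1 (max 0 (- x))" for x :: real
  have f: "isCont f x" "norm (f x) \<le> 1" "f x \<ge> 0" for x
    unfolding f_def by (auto intro!: continuous_intros)
  have "f \<in> borel_measurable borel"
    using f(1) by (intro borel_measurable_continuous_onI continuous_at_imp_continuous_on) auto
  then have int: "integrable \<nu> f" by (intro integrable_const_bound[where B=1]) (auto simp: f(2) simp del: real_norm_def)
  have "(\<integral>x. f x \<partial>\<mu> n) = 0" for n
    by (rule integral_eq_zero_AE) (use nonneg[of n] in \<open>auto simp: f_def elim!: eventually_mono\<close>)
  moreover have "(\<lambda>n. \<integral>x. f x \<partial>\<mu> n) \<longlonglongrightarrow> (\<integral>x. f x \<partial>\<nu>)"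
    by (rule weak_conv_imp_integral_bdd_continuous_conv[OF distr \<nu> conv f(1,2)])
  ultimately have "(\<integral>x. f x \<partial>\<nu>) = 0" by (simp add: LIMSEQ_const_iff)
  then have "AE x in \<nu>. f x = 0"
    using integral_nonneg_eq_0_iff_AE[OF int] f(3) by simp
  then show ?thesis
    by (rule eventually_mono) (auto simp: f_def min_def max_def split: if_splits)
qed

lemma weak_conv_laplace:
  fixes \<mu> :: "nat \<Rightarrow> real measure"
  assumes distr: "\<And>n. real_distribution (\<mu> n)" and nonneg: "\<And>n. AE x in \<mu> n. 0 \<le> x"
    and \<nu>: "real_distribution \<nu>" and conv: "weak_conv_m \<mu> \<nu>" and s: "s > 0"
  shows "(\<lambda>n. \<integral>x. exp (- s * x) \<partial>\<mu> n) \<longlonglongrightarrow> (\<integral>x. exp (- s * x) \<partial>\<nu>)"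
proof -
  \<comment> \<open>\<open>exp (- s * x)\<close> is unbounded on the left, so first cut it off at \<open>0\<close>.\<close>
  define f where "f x = exp (- s * max x 0)" for x
  have f: "isCont f x" "norm (f x) \<le> 1" for x
    unfolding f_def using s by (auto intro!: continuous_intros)
  have f_eq: "(\<integral>x. f x \<partial>M) = (\<integral>x. exp (- s * x) \<partial>M)"
    if "real_distribution M" "AE x in M. 0 \<le> x" for M
  proof -
    interpret real_distribution M by fact
    show ?thesis
    proof (rule integral_cong_AE)
      show "AE x in M. f x = exp (- s * x)"
        using that(2) by eventually_elim (simp add: f_def max_def)
    qed (simp_all add: f_def)
  qed
  show ?thesis
    using weak_conv_imp_integral_bdd_continuous_conv[OF distr \<nu> conv f]
    by (simp add: f_eq distr nonneg \<nu> weak_conv_nonneg[OF distr nonneg \<nu> conv])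
qed

theorem weak_conv_if_laplace_tendsto:
  fixes \<mu> :: "nat \<Rightarrow> real measure" and L :: "real \<Rightarrow> real"
  assumes distr: "\<And>n. real_distribution (\<mu> n)" and nonneg: "\<And>n. AE x in \<mu> n. 0 \<le> x"
    and conv: "\<And>s. s > 0 \<Longrightarrow> (\<lambda>n. \<integral>x. exp (- s * x) \<partial>\<mu> n) \<longlonglongrightarrow> L s"
    and bound: "\<And>n s. s > 0 \<Longrightarrow> 1 - (\<integral>x. exp (- s * x) \<partial>\<mu> n) \<le> C * s"
  shows "\<exists>\<nu>. real_distribution \<nu> \<and> (AE x in \<nu>. 0 \<le> x)
           \<and> (\<forall>s>0. (\<integral>x. exp (- s * x) \<partial>\<nu>) = L s) \<and> weak_conv_m \<mu> \<nu>"
proof -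
  have tight: "tight \<mu>" by (rule tight_if_laplace_bound[OF distr nonneg bound])
  have limit: "(AE x in \<nu>. 0 \<le> x) \<and> (\<forall>s>0. (\<integral>x. exp (- s * x) \<partial>\<nu>) = L s)"
    if r: "strict_mono r" and \<nu>: "real_distribution \<nu>" and wc: "weak_conv_m (\<mu> \<circ> r) \<nu>" for r \<nu>
  proof -
    have distr': "real_distribution ((\<mu> \<circ> r) n)" and nonneg': "AE x in (\<mu> \<circ> r) n. 0 \<le> x" for n
      unfolding comp_def by (rule distr, rule nonneg)
    have "(\<integral>x. exp (- s * x) \<partial>\<nu>) = L s" if "s > 0" for s
      using weak_conv_laplace[OF distr' nonneg' \<nu> wc that] LIMSEQ_subseq_LIMSEQ[OF conv[OF that] r]
      by (auto simp: comp_def intro: LIMSEQ_unique)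
    then show ?thesis using weak_conv_nonneg[OF distr' nonneg' \<nu> wc] by blast
  qed
  obtain r \<nu> where r: "strict_mono r" and \<nu>: "real_distribution \<nu>" and wc: "weak_conv_m (\<mu> \<circ> r) \<nu>"
    using tight_imp_convergent_subsubsequence[OF tight strict_mono_id] by auto
  note \<nu>_limit = limit[OF r \<nu> wc]
  have "weak_conv_m \<mu> \<nu>"
  proof (rule tight_subseq_weak_converge[OF distr \<nu> tight])
    fix s \<nu>' assume s: "strict_mono s" and \<nu>': "real_distribution \<nu>'" and wc': "weak_conv_m (\<mu> \<circ> s) \<nu>'"
    have "\<nu>' = \<nu>"
      using limit[OF s \<nu>' wc'] \<nu>_limit by (intro real_distribution_eq_if_laplace_eq[OF \<nu>' \<nu>]) auto
    then show "weak_conv_m (\<mu> \<circ> s) \<nu>" using wc' by simp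
  qed
  then show ?thesis using \<nu> \<nu>_limit by blast
qed

section \<open>The explicit offspring law\<close>

text \<open>
  \<open>S\<close> maps \<open>[0, 1)\<close> onto \<open>[3, \<infinity>)\<close> with inverse \<open>S_inv\<close>, and \<open>g_theta = S_inv \<circ> (\<lambda>t. t + 2) \<circ> S\<close>.
\<close>

definition S :: "real \<Rightarrow> real" where "S y = sqrt ((9 - y) / (1 - y))"

definition S_inv :: "real \<Rightarrow> real" where "S_inv t = 1 - 8 / (t^2 - 1)"

lemma S_0: "S 0 = 3"
  by (simp add: S_def real_sqrt_eq_iff)

lemma S_squared: assumes "y < 1" shows "(S y)^2 = 1 + 8 / (1 - y)"
  using assms by (simp add: S_def field_simps)

lemma S_ge_3: assumes "0 \<le> y" "y < 1" shows "S y \<ge> 3"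
proof -
  have "sqrt 9 \<le> sqrt ((9 - y) / (1 - y))"
    using assms by (intro real_sqrt_le_mono) (simp add: field_simps)
  then show ?thesis by (simp add: S_def real_sqrt_eq_iff)
qed

lemma S_inv_range: assumes "t \<ge> 3" shows "0 \<le> S_inv t" "S_inv t < 1"
proof -
  have "t^2 \<ge> 9" using power_mono[of 3 t 2] assms by simp
  then show "0 \<le> S_inv t" "S_inv t < 1" by (auto simp: S_inv_def field_simps)
qed

lemma S_S_inv: assumes "t \<ge> 3" shows "S (S_inv t) = t"
proof -
  have "t^2 \<ge> 9" using power_mono[of 3 t 2] assms by simp
  then have "(9 - S_inv t) / (1 - S_inv t) = t^2" by (simp add: S_inv_def field_simps)
  then show ?thesis using assms by (simp add: S_def)
qed

lemma S_inv_S: assumes "y < 1" shows "S_inv (S y) = y"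
  using assms by (simp add: S_inv_def S_squared field_simps)

lemma g_theta_eq_S_inv: "g_theta y = S_inv (S y + 2)"
  by (simp add: g_theta_def S_inv_def S_def)

definition gw_rescaled :: "nat pmf \<Rightarrow> nat \<Rightarrow> real measure" where
  "gw_rescaled \<theta> r =
     distr (measure_pmf (cond_pmf (gw_law \<theta> r) {k. k \<noteq> 0})) borel (\<lambda>k. real k / (real r)^2)"

lemma real_distribution_gw_rescaled: "real_distribution (gw_rescaled \<theta> r)"
  unfolding gw_rescaled_def by (intro prob_space.real_distribution_distr prob_space_measure_pmf) simp

lemma AE_gw_rescaled_nonneg: "AE x in gw_rescaled \<theta> r. 0 \<le> x"
  unfolding gw_rescaled_def by (subst AE_distr_iff) auto

lemma integral_gw_rescaled:
  assumes [measurable]: "(f :: real \<Rightarrow> real) \<in> borel_measurable borel"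
  shows "(\<integral>x. f x \<partial>gw_rescaled \<theta> r)
       = (\<integral>k. f (real k / (real r)^2) \<partial>measure_pmf (cond_pmf (gw_law \<theta> r) {k. k \<noteq> 0}))"
  unfolding gw_rescaled_def by (rule integral_distr) auto

text \<open>The closed form of the Laplace transform of \<open>gw_rescaled \<theta> n\<close> for \<open>n \<ge> 1\<close>.\<close>

definition gw_laplace :: "nat \<Rightarrow> real \<Rightarrow> real" where
  "gw_laplace n s =
     1 - 8 / ((S (exp (- s / (real n)^2)) + 2 * real n)^2 - 1) * ((real n + 1) * (real n + 2) / 2)"

lemma gw_laplace_bound:
  assumes n: "n \<ge> 1" and s: "s > 0"
  shows "1 - gw_laplace n s \<le> 3 * s"
proof -
  define y where "y = exp (- s / (real n)^2)"
  have y: "0 \<le> y" "y < 1" using assms by (auto simp: y_def)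
  have n2: "(real n)^2 \<ge> 1" using n by simp
  have "1 - y \<le> s / (real n)^2"
    using exp_ge_add_one_self[of "- s / (real n)^2"] by (simp add: y_def)
  then have "8 / (s / (real n)^2) \<le> 8 / (1 - y)"
    using y by (intro divide_left_mono) (use s n in auto)
  then have Sy: "8 * (real n)^2 / s \<le> (S y)^2" using S_squared[OF y(2)] by simp
  define D where "D = (S y + 2 * real n)^2 - 1"
  have "D = (S y)^2 + 4 * real n * S y + (4 * (real n)^2 - 1)"
    by (simp add: D_def power2_eq_square algebra_simps)
  moreover have "4 * real n * S y \<ge> 0" using S_ge_3[OF y] by simp
  ultimately have D: "8 * (real n)^2 / s \<le> D" using Sy n2 by linarith
  have D_pos: "8 * (real n)^2 / s > 0" using s n by simp
  have "real n \<le> (real n)^2"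
    using n power_increasing[of 1 2 "real n"] by simp
  then have Q: "(real n + 1) * (real n + 2) \<le> 6 * (real n)^2"
    using n2 by (simp add: algebra_simps power2_eq_square)
  have "1 - gw_laplace n s = 8 / D * ((real n + 1) * (real n + 2) / 2)"
    by (simp add: gw_laplace_def D_def y_def)
  also have "\<dots> \<le> 8 / (8 * (real n)^2 / s) * (6 * (real n)^2 / 2)"
  proof (rule mult_mono)
    show "8 / D \<le> 8 / (8 * (real n)^2 / s)"
      using D D_pos by (intro divide_left_mono mult_pos_pos) auto
  qed (use Q s in auto)
  also have "\<dots> = 3 * s" using s n by (simp add: field_simps)
  finally show ?thesis .
qed

lemma gw_laplace_tendsto:
  assumes s: "s > 0"
  shows "(\<lambda>n. gw_laplace n s) \<longlonglongrightarrow> 1 - (1 + sqrt (2 / s)) powr (-2)"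
proof -
  define a where "a n = S (exp (- s / (real n)^2)) / real n" for n
  have "a \<longlonglongrightarrow> (8 * inverse s) powr (1/2)"
    unfolding a_def S_def using s by real_asymp
  moreover have "(8 * inverse s) powr (1/2) = 2 * sqrt (2 / s)"
  proof -
    have "(8 * inverse s) powr (1/2) = sqrt (2^2 * (2 / s))" using s by (simp add: powr_half_sqrt field_simps)
    also have "\<dots> = 2 * sqrt (2 / s)" by (subst real_sqrt_mult) simp
    finally show ?thesis .
  qed
  ultimately have a: "a \<longlonglongrightarrow> 2 * sqrt (2 / s)" by simp
  have closed_form: "gw_laplace n s = 1 - 4 * ((1 + 1 / real n) * (1 + 2 / real n)) / ((a n + 2)^2 - (1 / real n)^2)"
    if "n \<ge> 1" for n
  proof -
    define T where "T = S (exp (- s / (real n)^2))"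
    have n: "(real n)^2 > 0" using that by simp
    have rescale: "x > 0 \<Longrightarrow> 1 - 8 / D * (Q / 2) = 1 - 4 * (Q / x) / (D / x)" for D Q x :: real
      by (simp add: field_simps)
    have aT: "a n = T / real n" by (simp add: a_def T_def)
    have D: "(a n + 2)^2 - (1 / real n)^2 = ((T + 2 * real n)^2 - 1) / (real n)^2"
      unfolding aT using that by (simp add: field_simps power2_eq_square)
    have Q: "(1 + 1 / real n) * (1 + 2 / real n) = (real n + 1) * (real n + 2) / (real n)^2"
      using that by (simp add: field_simps power2_eq_square)
    have "gw_laplace n s = 1 - 8 / ((T + 2 * real n)^2 - 1) * ((real n + 1) * (real n + 2) / 2)"
      unfolding gw_laplace_def T_def ..
    also have "\<dots> = 1 - 4 * ((real n + 1) * (real n + 2) / (real n)^2)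
                          / (((T + 2 * real n)^2 - 1) / (real n)^2)"
      using n by (rule rescale)
    finally show ?thesis unfolding D Q .
  qed
  have eq: "\<forall>\<^sub>F n in sequentially. 1 - 4 * ((1 + 1 / real n) * (1 + 2 / real n)) / ((a n + 2)^2 - (1 / real n)^2)
                   = gw_laplace n s"
    using eventually_ge_at_top[of 1] by eventually_elim (rule closed_form[symmetric])
  have r: "sqrt (2 / s) \<ge> 0" using s by simp
  then have "(\<lambda>n. 1 - 4 * ((1 + 1 / real n) * (1 + 2 / real n)) / ((a n + 2)^2 - (1 / real n)^2))
     \<longlonglongrightarrow> 1 - 4 * ((1 + 0) * (1 + 0)) / ((2 * sqrt (2 / s) + 2)^2 - 0^2)"
    by (intro tendsto_intros a) (auto simp: add_nonneg_eq_0_iff)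
  moreover have "(1 + sqrt (2 / s)) powr (-2) = 4 / (2 * sqrt (2 / s) + 2)^2"
  proof -
    have "(1 + sqrt (2 / s)) powr (-2) = 1 / (1 + sqrt (2 / s))^2"
      using r by (simp add: powr_minus_divide powr_numeral add_nonneg_pos)
    moreover have "(2 * sqrt (2 / s) + 2)^2 = 4 * (1 + sqrt (2 / s))^2"
      by (simp add: power2_eq_square algebra_simps)
    ultimately show ?thesis by simp
  qed
  ultimately show ?thesis using tendsto_cong[OF eq] by simp
qed

context
  fixes \<theta> :: "nat pmf"
  assumes gen: "\<And>y::real. 0 \<le> y \<Longrightarrow> y < 1 \<Longrightarrow> (\<Sum>k. pmf \<theta> k * y ^ k) = g_theta y"
begin

lemma pgf_gw_law:
  assumes "0 \<le> y" "y < 1"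
  shows "pgf (gw_law \<theta> n) y = ennreal (S_inv (S y + 2 * real n))"
  using assms
proof (induction n arbitrary: y)
  case 0
  then show ?case by (simp add: pgf_def S_inv_S)
next
  case (Suc n)
  have pgf_\<theta>: "pgf \<theta> y = ennreal (g_theta y)"
    using pgf_eq_suminf[of y \<theta>] gen[of y] Suc.prems by simp
  have S3: "S y \<ge> 3" using S_ge_3 Suc.prems by simp
  have g: "0 \<le> g_theta y" "g_theta y < 1"
    using S_inv_range[of "S y + 2"] S3 by (auto simp: g_theta_eq_S_inv)
  have "pgf (gw_law \<theta> (Suc n)) y = pgf (gw_law \<theta> n) (g_theta y)"
    using pgf_bind_offspring_sum[OF Suc.prems(1) pgf_\<theta> g(1)] by simp
  also have "\<dots> = ennreal (S_inv (S (g_theta y) + 2 * real n))"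
    using Suc.IH g by simp
  also have "S (g_theta y) = S y + 2" unfolding g_theta_eq_S_inv using S3 by (intro S_S_inv) simp
  finally show ?case by (simp add: algebra_simps)
qed

lemma pmf_gw_law_0: "pmf (gw_law \<theta> n) 0 = 1 - 2 / ((real n + 1) * (real n + 2))"
proof -
  have "ennreal (pmf (gw_law \<theta> n) 0) = ennreal (S_inv (3 + 2 * real n))"
    using pgf_0[of "gw_law \<theta> n"] pgf_gw_law[of 0 n] by (simp add: S_0)
  then have "pmf (gw_law \<theta> n) 0 = S_inv (3 + 2 * real n)"
    using S_inv_range[of "3 + 2 * real n"] by (simp add: ennreal_inj)
  also have "(3 + 2 * real n)^2 - 1 = 4 * ((real n + 1) * (real n + 2))"
    by (simp add: power2_eq_square algebra_simps)
  then have "S_inv (3 + 2 * real n) = 1 - 2 / ((real n + 1) * (real n + 2))"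
    by (simp add: S_inv_def)
  finally show ?thesis .
qed

lemma prob_gw_law_nonzero:
  "measure_pmf.prob (gw_law \<theta> n) {k. k \<noteq> 0} = 2 / ((real n + 1) * (real n + 2))"
proof -
  have "{k::nat. k \<noteq> 0} = UNIV - {0}" by auto
  then have "measure_pmf.prob (gw_law \<theta> n) {k. k \<noteq> 0} = 1 - pmf (gw_law \<theta> n) 0"
    using measure_pmf.prob_compl[of "{0}" "gw_law \<theta> n"] by (simp add: measure_pmf_single)
  then show ?thesis by (simp add: pmf_gw_law_0)
qed

lemma laplace_gw_rescaled:
  assumes "n \<ge> 1" "s > 0"
  shows "(\<integral>x. exp (- s * x) \<partial>gw_rescaled \<theta> n) = gw_laplace n s"
proof -
  define y where "y = exp (- s / (real n)^2)"
  define D where "D = (S y + 2 * real n)^2 - 1"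
  define Q where "Q = (real n + 1) * (real n + 2)"
  have y: "0 \<le> y" "y < 1" using assms by (auto simp: y_def)
  have Q_pos: "Q > 0" by (simp add: Q_def)
  have ne: "set_pmf (gw_law \<theta> n) \<inter> {k. k \<noteq> 0} \<noteq> {}"
    using prob_gw_law_nonzero[of n] by (auto simp: measure_pmf_zero_iff[symmetric])
  have "(\<integral>x. exp (- s * x) \<partial>gw_rescaled \<theta> n)
        = (\<integral>k. y ^ k \<partial>measure_pmf (cond_pmf (gw_law \<theta> n) {k. k \<noteq> 0}))"
    by (simp add: integral_gw_rescaled y_def exp_of_nat_mult[symmetric] mult.commute)
  also have "\<dots> = (S_inv (S y + 2 * real n) - pmf (gw_law \<theta> n) 0)
                    / measure_pmf.prob (gw_law \<theta> n) {k. k \<noteq> 0}"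
    using integral_power_cond_pmf_nonzero[OF ne] pgf_gw_law[OF y] y
      S_inv_range[of "S y + 2 * real n"] S_ge_3[OF y] by simp
  also have "\<dots> = (1 - 8 / D - (1 - 2 / Q)) / (2 / Q)"
    unfolding prob_gw_law_nonzero pmf_gw_law_0 S_inv_def D_def Q_def ..
  also have "\<dots> = 1 - 8 / D * (Q / 2)"
    using Q_pos by (simp add: field_simps)
  also have "\<dots> = gw_laplace n s"
    unfolding gw_laplace_def D_def Q_def y_def ..
  finally show ?thesis .
qed

lemma laplace_gw_rescaled_bound:
  assumes "s > 0"
  shows "1 - (\<integral>x. exp (- s * x) \<partial>gw_rescaled \<theta> n) \<le> 3 * s"
proof (cases "n = 0")
  case True
  \<comment> \<open>Division by \<open>0\<close> makes \<open>gw_rescaled \<theta> 0\<close> the point mass at \<open>0\<close>.\<close>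
  then show ?thesis using assms by (simp add: integral_gw_rescaled)
next
  case False
  then show ?thesis using assms laplace_gw_rescaled gw_laplace_bound by simp
qed

lemma laplace_gw_rescaled_tendsto:
  assumes "s > 0"
  shows "(\<lambda>n. \<integral>x. exp (- s * x) \<partial>gw_rescaled \<theta> n) \<longlonglongrightarrow> 1 - (1 + sqrt (2 / s)) powr (-2)"
proof -
  have "\<forall>\<^sub>F n in sequentially. gw_laplace n s = (\<integral>x. exp (- s * x) \<partial>gw_rescaled \<theta> n)"
    using eventually_ge_at_top[of 1] by eventually_elim (rule laplace_gw_rescaled[symmetric, OF _ assms])
  then show ?thesis using gw_laplace_tendsto[OF assms] by (rule tendsto_cong[THEN iffD1])
qed

end

theorem lemma12:
  fixes \<theta> :: "nat pmf"
  assumes gen: "\<And>y::real. 0 \<le> y \<Longrightarrow> y < 1 \<Longrightarrow> (\<Sum>k. pmf \<theta> k * y ^ k) = g_theta y"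
  shows "((\<lambda>r. measure_pmf.prob (gw_law \<theta> r) {k. k \<noteq> 0}) \<sim>[at_top] (\<lambda>r. 2 / (real r)^2))
    \<and> (\<exists>\<mu>. real_distribution \<mu> \<and> measure \<mu> {0..} = 1
          \<and> (\<forall>s>0. (\<integral>x. exp (- s * x) \<partial>\<mu>) = 1 - (1 + sqrt (2 / s)) powr (-2))
          \<and> weak_conv_m
              (\<lambda>r. distr (measure_pmf (cond_pmf (gw_law \<theta> r) {k. k \<noteq> 0})) borel
                     (\<lambda>k. real k / (real r)^2))
              \<mu>)"
proof
  have "(\<lambda>r::nat. 2 / ((real r + 1) * (real r + 2))) \<sim>[at_top] (\<lambda>r. 2 / (real r)^2)"
    by real_asymp
  moreover have "(\<lambda>r. measure_pmf.prob (gw_law \<theta> r) {k. k \<noteq> 0}) = (\<lambda>r. 2 / ((real r + 1) * (real r + 2)))"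
    by (rule ext) (rule prob_gw_law_nonzero[OF gen])
  ultimately show "(\<lambda>r. measure_pmf.prob (gw_law \<theta> r) {k. k \<noteq> 0}) \<sim>[at_top] (\<lambda>r. 2 / (real r)^2)"
    by simp
  obtain \<nu> where \<nu>: "real_distribution \<nu>" "AE x in \<nu>. 0 \<le> x"
      "\<forall>s>0. (\<integral>x. exp (- s * x) \<partial>\<nu>) = 1 - (1 + sqrt (2 / s)) powr (-2)"
      "weak_conv_m (gw_rescaled \<theta>) \<nu>"
    using weak_conv_if_laplace_tendsto[OF real_distribution_gw_rescaled AE_gw_rescaled_nonneg
        laplace_gw_rescaled_tendsto[OF gen] laplace_gw_rescaled_bound[OF gen]] by blast
  have "measure \<nu> {0..} = 1"
  proof -
    interpret real_distribution \<nu> by (rule \<nu>(1))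
    show ?thesis using \<nu>(2) by (subst prob_eq_1) auto
  qed
  with \<nu> show "\<exists>\<mu>. real_distribution \<mu> \<and> measure \<mu> {0..} = 1
          \<and> (\<forall>s>0. (\<integral>x. exp (- s * x) \<partial>\<mu>) = 1 - (1 + sqrt (2 / s)) powr (-2))
          \<and> weak_conv_m
              (\<lambda>r. distr (measure_pmf (cond_pmf (gw_law \<theta> r) {k. k \<noteq> 0})) borel
                     (\<lambda>k. real k / (real r)^2))
              \<mu>"
    unfolding gw_rescaled_def by blast
qed

end
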